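(* Let $y_0\in Y$ satisfy $d^*(y_0)=k^*(y_0)$. - If $V_T(\cdot)$ is continuous on $Y$ for every integer $T>1$, then the limit $\lim_{T\to\infty}V_T(y_0)$ exists and equals $d^*(y_0)$. - If $h_\alpha(\cdot)$ is continuous on $Y$ for every $\alpha\in(0,1)$, then the limit $\lim_{\alpha\uparrow1}h_\alpha(y_0)$ exists and equals $d^*(y_0)$.
   Context: Let $Y\subset\mathbb{R}^m$ be nonempty compact, $U_0$ a compact metric space, $U(\cdot):Y\rightsquigarrow U_0$ upper semicontinuous and compact-valued, and $f:\mathbb{R}^m\times U_0\to\mathbb{R}^m$, $k:\mathbb{R}^m\times U_0\to\mathbb{R}$ continuous. Put $A(y):=\{u\in U(y): f(y,u)\in Y\}$ and $G:=\{(y,u):y\in Y,\ u\in A(y)\}$. Standing assumption: $A(y)\ne\emptyset$ for all $y\in Y$. For $y_0\in Y$, an admissible process on $\{0,\dots,T-1\}$ (respectively on $\{0,1,\dots\}$) is a pair $(y(t),u(t))$ with $y(0)=y_0$, $u(t)\in A(y(t))$ and $y(t+1)=f(y(t),u(t))$. The controls form $\mathcal U_T(y_0)$ (respectively $\mathcal U(y_0)$). Value functions: $$V_T(y_0):=\frac1T\min_{u\in\mathcal U_T(y_0)}\sum_{t=0}^{T-1}k(y(t),u(t)),\qquad h_\alpha(y_0):=(1-\alpha)\min_{u\in\mathcal U(y_0)}\sum_{t=0}^\infty\alpha^tk(y(t),u(t)).$$ LP value: - $\mathcal P(G)$ denotes the Borel probability measures on $G$ and $\mathcal M_+(G)$ the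 finite nonnegative Borel measures on $G$. - $W:=\{\gamma\in\mathcal P(G):\int_G(\varphi(f(y,u))-\varphi(y))\,d\gamma=0\ \forall\varphi\in C(Y)\}$. - $k^*(y_0)$ is the infimum of $\int_Gk\,d\gamma$ over pairs $(\gamma,\xi)\in\mathcal P(G)\times\mathcal M_+(G)$ with $\gamma\in W$ and $\int_G(\varphi(y_0)-\varphi(y))\,d\gamma+\int_G(\varphi(f(y,u))-\varphi(y))\,d\xi=0$ for all $\varphi\in C(Y)$. Dual value: $d^*(y_0):=\sup\mu$, where the supremum is over triples $(\mu,\psi,\eta)\in\mathbb{R}\times C(Y)\times C(Y)$ with, for all $(y,u)\in G$: $$k(y,u)+\psi(y_0)-\psi(y)+\eta(f(y,u))-\eta(y)-\mu\ge0,\qquad\psi(f(y,u))-\psi(y)\ge0.$$ *)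

theory Defs
  imports "HOL-Analysis.Analysis" "HOL-Probability.Probability"
begin

definition usc_on :: "'y::metric_space set \<Rightarrow> ('y \<Rightarrow> 'u::topological_space set) \<Rightarrow> bool" where
  "usc_on Y U \<longleftrightarrow> (\<forall>y\<in>Y. \<forall>V. open V \<and> U y \<subseteq> V \<longrightarrow>
      (\<exists>e>0. \<forall>y'\<in>Y. dist y' y < e \<longrightarrow> U y' \<subseteq> V))"

definition Aset :: "('y \<Rightarrow> 'u \<Rightarrow> 'y) \<Rightarrow> 'y set \<Rightarrow> ('y \<Rightarrow> 'u set) \<Rightarrow> 'y \<Rightarrow> 'u set" where
  "Aset f Y U y = {u \<in> U y. f y u \<in> Y}"

definition Gset :: "('y \<Rightarrow> 'u \<Rightarrow> 'y) \<Rightarrow> 'y set \<Rightarrow> ('y \<Rightarrow> 'u set) \<Rightarrow> ('y \<times> 'u) set" where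
  "Gset f Y U = {(y, u). y \<in> Y \<and> u \<in> Aset f Y U y}"

fun traj :: "('y \<Rightarrow> 'u \<Rightarrow> 'y) \<Rightarrow> 'y \<Rightarrow> (nat \<Rightarrow> 'u) \<Rightarrow> nat \<Rightarrow> 'y" where
  "traj f y0 u 0 = y0"
| "traj f y0 u (Suc t) = f (traj f y0 u t) (u t)"

definition adm_T :: "('y \<Rightarrow> 'u \<Rightarrow> 'y) \<Rightarrow> 'y set \<Rightarrow> ('y \<Rightarrow> 'u set) \<Rightarrow> nat \<Rightarrow> 'y \<Rightarrow> (nat \<Rightarrow> 'u) set" where
  "adm_T f Y U T y0 = {u. \<forall>t<T. u t \<in> Aset f Y U (traj f y0 u t)}"

definition adm :: "('y \<Rightarrow> 'u \<Rightarrow> 'y) \<Rightarrow> 'y set \<Rightarrow> ('y \<Rightarrow> 'u set) \<Rightarrow> 'y \<Rightarrow> (nat \<Rightarrow> 'u) set" where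
  "adm f Y U y0 = {u. \<forall>t. u t \<in> Aset f Y U (traj f y0 u t)}"

definition V_T :: "('y \<Rightarrow> 'u \<Rightarrow> 'y) \<Rightarrow> ('y \<Rightarrow> 'u \<Rightarrow> real) \<Rightarrow> 'y set \<Rightarrow> ('y \<Rightarrow> 'u set)
    \<Rightarrow> nat \<Rightarrow> 'y \<Rightarrow> real" where
  "V_T f k Y U T y0 = (1 / real T) *
     Inf {(\<Sum>t<T. k (traj f y0 u t) (u t)) | u. u \<in> adm_T f Y U T y0}"

definition h_disc :: "('y \<Rightarrow> 'u \<Rightarrow> 'y) \<Rightarrow> ('y \<Rightarrow> 'u \<Rightarrow> real) \<Rightarrow> 'y set \<Rightarrow> ('y \<Rightarrow> 'u set)
    \<Rightarrow> real \<Rightarrow> 'y \<Rightarrow> real" where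
  "h_disc f k Y U \<alpha> y0 = (1 - \<alpha>) *
     Inf {(\<Sum>t. \<alpha> ^ t * k (traj f y0 u t) (u t)) | u. u \<in> adm f Y U y0}"

definition borel_prob_on :: "'a::topological_space set \<Rightarrow> 'a measure \<Rightarrow> bool" where
  "borel_prob_on S M \<longleftrightarrow> prob_space M \<and> sets M = sets (restrict_space borel S)"

definition borel_finite_on :: "'a::topological_space set \<Rightarrow> 'a measure \<Rightarrow> bool" where
  "borel_finite_on S M \<longleftrightarrow> finite_measure M \<and> sets M = sets (restrict_space borel S)"

definition Wset :: "('y \<Rightarrow> 'u \<Rightarrow> 'y) \<Rightarrow> 'y::topological_space set \<Rightarrow> ('y \<Rightarrow> 'u::topological_space set)
    \<Rightarrow> ('y \<times> 'u) measure set" where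
  "Wset f Y U = {\<gamma>. borel_prob_on (Gset f Y U) \<gamma> \<and>
     (\<forall>\<phi>::'y \<Rightarrow> real. continuous_on Y \<phi> \<longrightarrow>
        (\<integral>z. \<phi> (f (fst z) (snd z)) - \<phi> (fst z) \<partial>\<gamma>) = 0)}"

definition k_star :: "('y \<Rightarrow> 'u \<Rightarrow> 'y) \<Rightarrow> ('y \<Rightarrow> 'u \<Rightarrow> real) \<Rightarrow> 'y::topological_space set
    \<Rightarrow> ('y \<Rightarrow> 'u::topological_space set) \<Rightarrow> 'y \<Rightarrow> ereal" where
  "k_star f k Y U y0 = Inf {ereal (\<integral>z. k (fst z) (snd z) \<partial>\<gamma>) | \<gamma> \<xi>.
     \<gamma> \<in> Wset f Y U \<and> borel_finite_on (Gset f Y U) \<xi> \<and>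
     (\<forall>\<phi>::'y \<Rightarrow> real. continuous_on Y \<phi> \<longrightarrow>
        (\<integral>z. \<phi> y0 - \<phi> (fst z) \<partial>\<gamma>) + (\<integral>z. \<phi> (f (fst z) (snd z)) - \<phi> (fst z) \<partial>\<xi>) = 0)}"

definition d_star :: "('y \<Rightarrow> 'u \<Rightarrow> 'y) \<Rightarrow> ('y \<Rightarrow> 'u \<Rightarrow> real) \<Rightarrow> 'y::topological_space set
    \<Rightarrow> ('y \<Rightarrow> 'u set) \<Rightarrow> 'y \<Rightarrow> ereal" where
  "d_star f k Y U y0 = Sup {ereal \<mu> | \<mu>. \<exists>\<psi> \<eta> :: 'y \<Rightarrow> real.
     continuous_on Y \<psi> \<and> continuous_on Y \<eta> \<and>
     (\<forall>(y, u) \<in> Gset f Y U.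
        k y u + \<psi> y0 - \<psi> y + \<eta> (f y u) - \<eta> y - \<mu> \<ge> 0 \<and> \<psi> (f y u) - \<psi> y \<ge> 0)}"

end

theory Submission
  imports Defs
begin

text \<open>Both limits are squeezed between the dual and the primal problem. For a dual-feasible
  triple (\<mu>, \<psi>, \<eta>), \<psi> is nondecreasing along admissible trajectories, so every stage cost
  is at least \<mu> + \<eta>(y(t)) - \<eta>(y(t+1)); the \<eta>-terms telescope, which gives
  V_T(y0) \<ge> \<mu> - O(1/T) and h_\<alpha>(y0) \<ge> \<mu> - O(1 - \<alpha>).
  For a primal-feasible (\<gamma>, \<xi>), the value functions satisfy the dynamic-programming
  inequalities; integrating these against the invariant measure \<gamma> bounds their \<gamma>-averages
  by the value of (\<gamma>, \<xi>), and since they are continuous they may be used as test functions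
  in the constraint on \<xi>, which transfers the bound to y0 up to O(1/T) resp. O(1 - \<alpha>).
  So the lim inf is at least d*(y0) and the lim sup at most k*(y0) = d*(y0).\<close>

section \<open>Admissible controls\<close>

lemma Gset_imp_in_Y:
  assumes "(y, a) \<in> Gset f Y U"
  shows "y \<in> Y" "f y a \<in> Y"
  using assms by (auto simp: Gset_def Aset_def)

lemma traj_case_nat_Suc: "traj f y (case_nat a v) (Suc t) = traj f (f y a) v t"
  by (induction t) auto

lemma adm_T_traj_in_Y:
  assumes "u \<in> adm_T f Y U T z" "z \<in> Y" "t \<le> T"
  shows "traj f z u t \<in> Y"
  using assms(3)
proof (induction t)
  case 0
  then show ?case using assms(2) by simp
next
  case (Suc t)
  then have "u t \<in> Aset f Y U (traj f z u t)" using assms(1) unfolding adm_T_def by auto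
  then show ?case by (simp add: Aset_def)
qed

lemma adm_T_traj_in_Gset:
  assumes "u \<in> adm_T f Y U T z" "z \<in> Y" "t < T"
  shows "(traj f z u t, u t) \<in> Gset f Y U"
  using adm_T_traj_in_Y[OF assms(1,2), of t] assms unfolding adm_T_def Gset_def by auto

lemma adm_T_Suc_imp_adm_T: "u \<in> adm_T f Y U (Suc T) z \<Longrightarrow> u \<in> adm_T f Y U T z"
  unfolding adm_T_def by auto

lemma adm_imp_adm_T: "u \<in> adm f Y U z \<Longrightarrow> u \<in> adm_T f Y U T z"
  unfolding adm_def adm_T_def by auto

lemma adm_traj_in_Gset:
  assumes "u \<in> adm f Y U z" "z \<in> Y"
  shows "(traj f z u t, u t) \<in> Gset f Y U"
  using adm_T_traj_in_Gset[OF adm_imp_adm_T[OF assms(1)] assms(2), of t "Suc t"] by simp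

lemma adm_nonempty:
  assumes "\<And>y. y \<in> Y \<Longrightarrow> Aset f Y U y \<noteq> {}" "z \<in> Y"
  shows "adm f Y U z \<noteq> {}"
proof -
  have "\<forall>y\<in>Y. \<exists>a. a \<in> Aset f Y U y" using assms(1) by blast
  from bchoice[OF this] obtain sel where sel: "\<And>y. y \<in> Y \<Longrightarrow> sel y \<in> Aset f Y U y"
    by blast
  define y where "y t = ((\<lambda>x. f x (sel x)) ^^ t) z" for t
  define u where "u t = sel (y t)" for t
  have traj_eq: "traj f z u t = y t" for t
    by (induction t) (simp_all add: y_def u_def)
  have y_in_Y: "y t \<in> Y" for t
  proof (induction t)
    case 0
    then show ?case using assms(2) by (simp add: y_def)
  next
    case (Suc t)
    then show ?case using sel[OF Suc] by (simp add: y_def Aset_def)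
  qed
  have "u \<in> adm f Y U z" unfolding adm_def using traj_eq sel y_in_Y u_def by auto
  then show ?thesis by blast
qed

lemma case_nat_in_adm_T:
  assumes "(y, a) \<in> Gset f Y U" "v \<in> adm_T f Y U T (f y a)"
  shows "case_nat a v \<in> adm_T f Y U (Suc T) y"
  unfolding adm_T_def
proof (intro CollectI allI impI)
  fix t assume "t < Suc T"
  then show "case_nat a v t \<in> Aset f Y U (traj f y (case_nat a v) t)"
    using assms traj_case_nat_Suc[of f y a v]
    by (cases t) (auto simp: Gset_def adm_T_def)
qed

lemma case_nat_in_adm:
  assumes "(y, a) \<in> Gset f Y U" "v \<in> adm f Y U (f y a)"
  shows "case_nat a v \<in> adm f Y U y"
  using case_nat_in_adm_T[OF assms(1) adm_imp_adm_T[OF assms(2)]] unfolding adm_T_def adm_def by blast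

section \<open>Primal and dual feasibility\<close>

definition dual_feasible :: "('y \<Rightarrow> 'u \<Rightarrow> 'y) \<Rightarrow> ('y \<Rightarrow> 'u \<Rightarrow> real) \<Rightarrow> 'y set \<Rightarrow> ('y \<Rightarrow> 'u set)
    \<Rightarrow> 'y \<Rightarrow> real \<Rightarrow> ('y \<Rightarrow> real) \<Rightarrow> ('y \<Rightarrow> real) \<Rightarrow> bool" where
  "dual_feasible f k Y U y0 \<mu> \<psi> \<eta> \<longleftrightarrow> (\<forall>(y, u) \<in> Gset f Y U.
     k y u + \<psi> y0 - \<psi> y + \<eta> (f y u) - \<eta> y - \<mu> \<ge> 0 \<and> \<psi> (f y u) - \<psi> y \<ge> 0)"

definition primal_feasible :: "('y \<Rightarrow> 'u \<Rightarrow> 'y) \<Rightarrow> 'y::topological_space set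
    \<Rightarrow> ('y \<Rightarrow> 'u::topological_space set) \<Rightarrow> 'y \<Rightarrow> ('y \<times> 'u) measure \<Rightarrow> ('y \<times> 'u) measure \<Rightarrow> bool" where
  "primal_feasible f Y U y0 \<gamma> \<xi> \<longleftrightarrow> \<gamma> \<in> Wset f Y U \<and> borel_finite_on (Gset f Y U) \<xi> \<and>
     (\<forall>\<phi>::'y \<Rightarrow> real. continuous_on Y \<phi> \<longrightarrow>
        (\<integral>z. \<phi> y0 - \<phi> (fst z) \<partial>\<gamma>) + (\<integral>z. \<phi> (f (fst z) (snd z)) - \<phi> (fst z) \<partial>\<xi>) = 0)"

lemma d_star_eq_Sup_dual_feasible:
  "d_star f k Y U y0 = Sup {ereal \<mu> | \<mu>. \<exists>\<psi> \<eta>.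
     continuous_on Y \<psi> \<and> continuous_on Y \<eta> \<and> dual_feasible f k Y U y0 \<mu> \<psi> \<eta>}"
  unfolding d_star_def dual_feasible_def by (rule refl)

lemma k_star_eq_Inf_primal_feasible:
  "k_star f k Y U y0 = Inf {ereal (\<integral>z. k (fst z) (snd z) \<partial>\<gamma>) | \<gamma> \<xi>. primal_feasible f Y U y0 \<gamma> \<xi>}"
  unfolding k_star_def primal_feasible_def by (rule refl)

lemma dual_feasibleD:
  assumes "dual_feasible f k Y U y0 \<mu> \<psi> \<eta>" "(y, a) \<in> Gset f Y U"
  shows "\<mu> + (\<eta> y - \<eta> (f y a)) + (\<psi> y - \<psi> y0) \<le> k y a" "\<psi> y \<le> \<psi> (f y a)"
  using assms unfolding dual_feasible_def by auto

lemma dual_feasible_stage_bound: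
  assumes "dual_feasible f k Y U z \<mu> \<psi> \<eta>"
    and "\<And>s. s \<le> t \<Longrightarrow> (traj f z u s, u s) \<in> Gset f Y U"
  shows "\<mu> + (\<eta> (traj f z u t) - \<eta> (traj f z u (Suc t))) \<le> k (traj f z u t) (u t)"
proof -
  have "\<psi> z \<le> \<psi> (traj f z u s)" if "s \<le> t" for s
    using that
  proof (induction s)
    case (Suc s)
    then show ?case using dual_feasibleD(2)[OF assms(1) assms(2)[of s]] by simp
  qed simp
  then have "\<psi> z \<le> \<psi> (traj f z u t)" by simp
  moreover have "\<mu> + (\<eta> (traj f z u t) - \<eta> (f (traj f z u t) (u t))) + (\<psi> (traj f z u t) - \<psi> z)
      \<le> k (traj f z u t) (u t)"
    by (rule dual_feasibleD(1)[OF assms(1) assms(2)]) simp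
  ultimately show ?thesis by simp
qed

lemma Liminf_ereal_ge_of_tendsto:
  assumes "F \<noteq> bot" "(g \<longlongrightarrow> c) F" "eventually (\<lambda>x. g x \<le> v x) F"
  shows "ereal c \<le> Liminf F (\<lambda>x. ereal (v x))"
proof -
  have "ereal c = Liminf F (\<lambda>x. ereal (g x))"
    by (rule lim_imp_Liminf[OF assms(1) tendsto_ereal[OF assms(2)], symmetric])
  also have "\<dots> \<le> Liminf F (\<lambda>x. ereal (v x))"
    by (rule Liminf_mono) (use assms(3) in \<open>auto elim: eventually_mono\<close>)
  finally show ?thesis .
qed

lemma Limsup_ereal_le_of_tendsto:
  assumes "F \<noteq> bot" "(g \<longlongrightarrow> c) F" "eventually (\<lambda>x. v x \<le> g x) F"
  shows "Limsup F (\<lambda>x. ereal (v x)) \<le> ereal c"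
proof -
  have "Limsup F (\<lambda>x. ereal (v x)) \<le> Limsup F (\<lambda>x. ereal (g x))"
    by (rule Limsup_mono) (use assms(3) in \<open>auto elim: eventually_mono\<close>)
  also have "\<dots> = ereal c" by (rule lim_imp_Limsup[OF assms(1) tendsto_ereal[OF assms(2)]])
  finally show ?thesis .
qed

lemma tendsto_d_star_by_duality:
  fixes v :: "'a \<Rightarrow> real"
  assumes F: "F \<noteq> bot" and gap: "d_star f k Y U y0 = k_star f k Y U y0"
    and lower: "\<And>\<mu> \<psi> \<eta>. continuous_on Y \<psi> \<Longrightarrow> continuous_on Y \<eta> \<Longrightarrow>
      dual_feasible f k Y U y0 \<mu> \<psi> \<eta> \<Longrightarrow> ereal \<mu> \<le> Liminf F (\<lambda>x. ereal (v x))"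
    and upper: "\<And>\<gamma> \<xi>. primal_feasible f Y U y0 \<gamma> \<xi> \<Longrightarrow>
      Limsup F (\<lambda>x. ereal (v x)) \<le> ereal (\<integral>z. k (fst z) (snd z) \<partial>\<gamma>)"
  shows "((\<lambda>x. ereal (v x)) \<longlongrightarrow> d_star f k Y U y0) F"
proof (rule Liminf_eq_Limsup[OF F])
  have "d_star f k Y U y0 \<le> Liminf F (\<lambda>x. ereal (v x))"
    unfolding d_star_eq_Sup_dual_feasible by (rule Sup_least) (auto intro: lower)
  moreover have "Limsup F (\<lambda>x. ereal (v x)) \<le> d_star f k Y U y0"
    unfolding gap k_star_eq_Inf_primal_feasible by (rule Inf_greatest) (auto intro: upper)
  moreover have "Liminf F (\<lambda>x. ereal (v x)) \<le> Limsup F (\<lambda>x. ereal (v x))"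
    by (rule Liminf_le_Limsup[OF F])
  ultimately show "Liminf F (\<lambda>x. ereal (v x)) = d_star f k Y U y0"
    and "Limsup F (\<lambda>x. ereal (v x)) = d_star f k Y U y0" by auto
qed

section \<open>Optimal costs and their lower bounds\<close>

definition opt_cost :: "('y \<Rightarrow> 'u \<Rightarrow> 'y) \<Rightarrow> ('y \<Rightarrow> 'u \<Rightarrow> real) \<Rightarrow> 'y set \<Rightarrow> ('y \<Rightarrow> 'u set)
    \<Rightarrow> nat \<Rightarrow> 'y \<Rightarrow> real" where
  "opt_cost f k Y U T z = (INF u \<in> adm_T f Y U T z. \<Sum>t<T. k (traj f z u t) (u t))"

definition opt_disc_cost :: "('y \<Rightarrow> 'u \<Rightarrow> 'y) \<Rightarrow> ('y \<Rightarrow> 'u \<Rightarrow> real) \<Rightarrow> 'y set \<Rightarrow> ('y \<Rightarrow> 'u set)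
    \<Rightarrow> real \<Rightarrow> 'y \<Rightarrow> real" where
  "opt_disc_cost f k Y U \<alpha> z = (INF u \<in> adm f Y U z. \<Sum>t. \<alpha> ^ t * k (traj f z u t) (u t))"

lemma V_T_eq_opt_cost: "V_T f k Y U T z = opt_cost f k Y U T z / real T"
  unfolding V_T_def opt_cost_def by (simp add: Setcompr_eq_image)

lemma h_disc_eq_opt_disc_cost: "h_disc f k Y U \<alpha> z = (1 - \<alpha>) * opt_disc_cost f k Y U \<alpha> z"
  unfolding h_disc_def opt_disc_cost_def by (simp add: Setcompr_eq_image)

lemma discounted_sum_bound:
  fixes b :: "nat \<Rightarrow> real"
  assumes b: "\<And>t. \<bar>b t\<bar> \<le> B" and \<alpha>: "0 \<le> \<alpha>" "\<alpha> < 1"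
  shows "summable (\<lambda>t. \<alpha> ^ t * b t)" "\<bar>\<Sum>t. \<alpha> ^ t * b t\<bar> \<le> B / (1 - \<alpha>)"
proof -
  have le: "norm (\<alpha> ^ t * b t) \<le> B * \<alpha> ^ t" for t
    using mult_left_mono[OF b[of t], of "\<alpha> ^ t"] \<alpha> by (simp add: abs_mult mult.commute)
  have geom: "(\<lambda>t. B * \<alpha> ^ t) sums (B / (1 - \<alpha>))"
    using sums_mult[OF geometric_sums, of \<alpha> B] \<alpha> by simp
  show "summable (\<lambda>t. \<alpha> ^ t * b t)"
    by (rule summable_comparison_test[OF _ sums_summable[OF geom]]) (use le in auto)
  show "\<bar>\<Sum>t. \<alpha> ^ t * b t\<bar> \<le> B / (1 - \<alpha>)"
    using norm_suminf_le[OF le sums_summable[OF geom]] by (simp only: real_norm_def sums_unique[OF geom, symmetric])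
qed

lemma discounted_telescope_bound:
  fixes b :: "nat \<Rightarrow> real"
  assumes b: "\<And>t. \<bar>b t\<bar> \<le> B" and \<alpha>: "0 \<le> \<alpha>" "\<alpha> < 1"
  shows "summable (\<lambda>t. \<alpha> ^ t * (b t - b (Suc t)))"
    "\<bar>\<Sum>t. \<alpha> ^ t * (b t - b (Suc t))\<bar> \<le> 2 * B"
proof -
  note S = discounted_sum_bound[of b B \<alpha>, OF b \<alpha>]
  note S' = discounted_sum_bound[of "\<lambda>t. b (Suc t)" B \<alpha>, OF b \<alpha>]
  show "summable (\<lambda>t. \<alpha> ^ t * (b t - b (Suc t)))"
    using summable_diff[OF S(1) S'(1)] by (simp add: right_diff_distrib)
  have "(\<Sum>t. \<alpha> ^ t * b t) = b 0 + \<alpha> * (\<Sum>t. \<alpha> ^ t * b (Suc t))"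
    using suminf_split_head[OF S(1)] suminf_mult[OF S'(1), of \<alpha>] by (simp add: mult.assoc)
  moreover have "(\<Sum>t. \<alpha> ^ t * (b t - b (Suc t))) = (\<Sum>t. \<alpha> ^ t * b t) - (\<Sum>t. \<alpha> ^ t * b (Suc t))"
    using suminf_diff[OF S(1) S'(1)] by (simp add: right_diff_distrib)
  ultimately have "(\<Sum>t. \<alpha> ^ t * (b t - b (Suc t))) = b 0 - (1 - \<alpha>) * (\<Sum>t. \<alpha> ^ t * b (Suc t))"
    by (simp add: algebra_simps)
  moreover have "\<bar>(1 - \<alpha>) * (\<Sum>t. \<alpha> ^ t * b (Suc t))\<bar> \<le> B"
    using S'(2) \<alpha> by (simp add: abs_mult pos_le_divide_eq mult.commute)
  ultimately show "\<bar>\<Sum>t. \<alpha> ^ t * (b t - b (Suc t))\<bar> \<le> 2 * B"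
    using b[of 0] abs_triangle_ineq4[of "b 0" "(1 - \<alpha>) * (\<Sum>t. \<alpha> ^ t * b (Suc t))"] by linarith
qed

locale bounded_cost_system =
  fixes Y :: "'y set" and U :: "'y \<Rightarrow> 'u set" and f :: "'y \<Rightarrow> 'u \<Rightarrow> 'y"
    and k :: "'y \<Rightarrow> 'u \<Rightarrow> real" and M :: real
  assumes Aset_nonempty: "\<And>y. y \<in> Y \<Longrightarrow> Aset f Y U y \<noteq> {}"
    and k_bounded: "\<And>y a. (y, a) \<in> Gset f Y U \<Longrightarrow> \<bar>k y a\<bar> \<le> M"
begin

lemma cost_abs_le:
  assumes "u \<in> adm_T f Y U T z" "z \<in> Y"
  shows "\<bar>\<Sum>t<T. k (traj f z u t) (u t)\<bar> \<le> real T * M"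
proof -
  have "\<bar>\<Sum>t<T. k (traj f z u t) (u t)\<bar> \<le> (\<Sum>t<T. \<bar>k (traj f z u t) (u t)\<bar>)"
    by (rule sum_abs)
  also have "\<dots> \<le> (\<Sum>t<T. M)"
    by (intro sum_mono k_bounded adm_T_traj_in_Gset[OF assms]) simp
  finally show ?thesis by simp
qed

lemma disc_cost_summable_abs_le:
  assumes "u \<in> adm f Y U z" "z \<in> Y" "0 \<le> \<alpha>" "\<alpha> < 1"
  shows "summable (\<lambda>t. \<alpha> ^ t * k (traj f z u t) (u t))"
    "\<bar>\<Sum>t. \<alpha> ^ t * k (traj f z u t) (u t)\<bar> \<le> M / (1 - \<alpha>)"
  using discounted_sum_bound[of "\<lambda>t. k (traj f z u t) (u t)" M \<alpha>]
    k_bounded[OF adm_traj_in_Gset[OF assms(1,2)]] assms(3,4) by auto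

lemma adm_nonempty_of_Y: "z \<in> Y \<Longrightarrow> adm f Y U z \<noteq> {}"
  by (intro adm_nonempty Aset_nonempty)

lemma adm_T_nonempty:
  assumes "z \<in> Y"
  shows "adm_T f Y U T z \<noteq> {}"
proof -
  obtain u where "u \<in> adm f Y U z" using adm_nonempty_of_Y[OF assms] by blast
  then have "u \<in> adm_T f Y U T z" by (rule adm_imp_adm_T)
  then show ?thesis by blast
qed

lemma opt_cost_le:
  assumes "z \<in> Y" "u \<in> adm_T f Y U T z"
  shows "opt_cost f k Y U T z \<le> (\<Sum>t<T. k (traj f z u t) (u t))"
  unfolding opt_cost_def
proof (rule cINF_lower[OF _ assms(2)])
  show "bdd_below ((\<lambda>u. \<Sum>t<T. k (traj f z u t) (u t)) ` adm_T f Y U T z)"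
    by (rule bdd_belowI2[of _ "- (real T * M)"])
       (use cost_abs_le[OF _ assms(1)] in \<open>force simp: abs_le_iff\<close>)
qed

lemma opt_cost_ge:
  assumes "z \<in> Y" "\<And>u. u \<in> adm_T f Y U T z \<Longrightarrow> c \<le> (\<Sum>t<T. k (traj f z u t) (u t))"
  shows "c \<le> opt_cost f k Y U T z"
  unfolding opt_cost_def using adm_T_nonempty[OF assms(1)] assms(2) by (rule cINF_greatest)

lemma opt_cost_abs_le:
  assumes "z \<in> Y"
  shows "\<bar>opt_cost f k Y U T z\<bar> \<le> real T * M"
proof -
  obtain u where u: "u \<in> adm_T f Y U T z" using adm_T_nonempty[OF assms] by blast
  have "opt_cost f k Y U T z \<le> real T * M"
    using opt_cost_le[OF assms u] cost_abs_le[OF u assms] by linarith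
  moreover have "- (real T * M) \<le> opt_cost f k Y U T z"
    using cost_abs_le[OF _ assms] by (intro opt_cost_ge[OF assms]) (force simp: abs_le_iff)
  ultimately show ?thesis by simp
qed

lemma opt_cost_Suc_le:
  assumes ya: "(y, a) \<in> Gset f Y U"
  shows "opt_cost f k Y U (Suc T) y \<le> k y a + opt_cost f k Y U T (f y a)"
proof -
  have "opt_cost f k Y U (Suc T) y - k y a \<le> opt_cost f k Y U T (f y a)"
  proof (rule opt_cost_ge[OF Gset_imp_in_Y(2)[OF ya]])
    fix v assume v: "v \<in> adm_T f Y U T (f y a)"
    have "opt_cost f k Y U (Suc T) y
        \<le> (\<Sum>t<Suc T. k (traj f y (case_nat a v) t) (case_nat a v t))"
      by (rule opt_cost_le[OF Gset_imp_in_Y(1)[OF ya] case_nat_in_adm_T[OF ya v]])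
    also have "\<dots> = k y a + (\<Sum>t<T. k (traj f (f y a) v t) (v t))"
      unfolding sum.lessThan_Suc_shift traj_case_nat_Suc by simp
    finally show "opt_cost f k Y U (Suc T) y - k y a \<le> (\<Sum>t<T. k (traj f (f y a) v t) (v t))"
      by simp
  qed
  then show ?thesis by simp
qed

lemma opt_cost_le_Suc:
  assumes z: "z \<in> Y"
  shows "opt_cost f k Y U T z - M \<le> opt_cost f k Y U (Suc T) z"
proof (rule opt_cost_ge[OF z])
  fix u assume u: "u \<in> adm_T f Y U (Suc T) z"
  have "opt_cost f k Y U T z \<le> (\<Sum>t<T. k (traj f z u t) (u t))"
    by (rule opt_cost_le[OF z adm_T_Suc_imp_adm_T[OF u]])
  moreover have "- M \<le> k (traj f z u T) (u T)"
    using k_bounded[OF adm_T_traj_in_Gset[OF u z, of T]] by simp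
  ultimately show "opt_cost f k Y U T z - M \<le> (\<Sum>t<Suc T. k (traj f z u t) (u t))" by simp
qed

lemma opt_cost_ge_dual:
  assumes z: "z \<in> Y" and dual: "dual_feasible f k Y U z \<mu> \<psi> \<eta>"
    and B: "\<And>y. y \<in> Y \<Longrightarrow> \<bar>\<eta> y\<bar> \<le> B"
  shows "real T * \<mu> - 2 * B \<le> opt_cost f k Y U T z"
proof (rule opt_cost_ge[OF z])
  fix u assume u: "u \<in> adm_T f Y U T z"
  let ?y = "traj f z u"
  have "(\<Sum>t<T. \<mu> + (\<eta> (?y t) - \<eta> (?y (Suc t)))) \<le> (\<Sum>t<T. k (?y t) (u t))"
    by (intro sum_mono dual_feasible_stage_bound[OF dual] adm_T_traj_in_Gset[OF u z]) auto
  moreover have "(\<Sum>t<T. \<mu> + (\<eta> (?y t) - \<eta> (?y (Suc t)))) = real T * \<mu> + (\<eta> z - \<eta> (?y T))"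
    unfolding sum.distrib sum_lessThan_telescope'[of "\<lambda>t. \<eta> (?y t)"] by simp
  moreover have "\<bar>\<eta> z\<bar> \<le> B" "\<bar>\<eta> (?y T)\<bar> \<le> B"
    using B z adm_T_traj_in_Y[OF u z, of T] by auto
  ultimately show "real T * \<mu> - 2 * B \<le> (\<Sum>t<T. k (?y t) (u t))" by (simp add: abs_le_iff)
qed

lemma opt_disc_cost_le:
  assumes "z \<in> Y" "0 \<le> \<alpha>" "\<alpha> < 1" "u \<in> adm f Y U z"
  shows "opt_disc_cost f k Y U \<alpha> z \<le> (\<Sum>t. \<alpha> ^ t * k (traj f z u t) (u t))"
  unfolding opt_disc_cost_def
proof (rule cINF_lower[OF _ assms(4)])
  show "bdd_below ((\<lambda>u. \<Sum>t. \<alpha> ^ t * k (traj f z u t) (u t)) ` adm f Y U z)"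
    by (rule bdd_belowI2[of _ "- (M / (1 - \<alpha>))"])
       (use disc_cost_summable_abs_le(2)[OF _ assms(1-3)] in \<open>force simp: abs_le_iff\<close>)
qed

lemma opt_disc_cost_ge:
  assumes "z \<in> Y" "\<And>u. u \<in> adm f Y U z \<Longrightarrow> c \<le> (\<Sum>t. \<alpha> ^ t * k (traj f z u t) (u t))"
  shows "c \<le> opt_disc_cost f k Y U \<alpha> z"
  unfolding opt_disc_cost_def
  using adm_nonempty_of_Y[OF assms(1)] assms(2) by (rule cINF_greatest)

lemma opt_disc_cost_abs_le:
  assumes "z \<in> Y" "0 \<le> \<alpha>" "\<alpha> < 1"
  shows "\<bar>opt_disc_cost f k Y U \<alpha> z\<bar> \<le> M / (1 - \<alpha>)"
proof -
  obtain u where u: "u \<in> adm f Y U z" using adm_nonempty_of_Y[OF assms(1)] by blast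
  have "opt_disc_cost f k Y U \<alpha> z \<le> M / (1 - \<alpha>)"
    using opt_disc_cost_le[OF assms u] disc_cost_summable_abs_le(2)[OF u assms] by linarith
  moreover have "- (M / (1 - \<alpha>)) \<le> opt_disc_cost f k Y U \<alpha> z"
    using disc_cost_summable_abs_le(2)[OF _ assms]
    by (intro opt_disc_cost_ge[OF assms(1)]) (force simp: abs_le_iff)
  ultimately show ?thesis by simp
qed

lemma opt_disc_cost_le_step:
  assumes ya: "(y, a) \<in> Gset f Y U" and \<alpha>: "0 < \<alpha>" "\<alpha> < 1"
  shows "opt_disc_cost f k Y U \<alpha> y \<le> k y a + \<alpha> * opt_disc_cost f k Y U \<alpha> (f y a)"
proof -
  have y: "y \<in> Y" and fy: "f y a \<in> Y" using Gset_imp_in_Y[OF ya] by auto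
  have "(opt_disc_cost f k Y U \<alpha> y - k y a) / \<alpha> \<le> opt_disc_cost f k Y U \<alpha> (f y a)"
  proof (rule opt_disc_cost_ge[OF fy])
    fix v assume v: "v \<in> adm f Y U (f y a)"
    let ?w = "case_nat a v"
    let ?c = "\<Sum>t. \<alpha> ^ t * k (traj f (f y a) v t) (v t)"
    have "(\<lambda>t. \<alpha> * (\<alpha> ^ t * k (traj f (f y a) v t) (v t))) sums (\<alpha> * ?c)"
      using sums_mult[OF summable_sums[OF disc_cost_summable_abs_le(1)[OF v fy]]] \<alpha> by simp
    then have "(\<lambda>t. \<alpha> ^ Suc t * k (traj f y ?w (Suc t)) (?w (Suc t))) sums (\<alpha> * ?c)"
      unfolding traj_case_nat_Suc by (simp add: mult.assoc)
    then have "(\<lambda>t. \<alpha> ^ t * k (traj f y ?w t) (?w t)) sums (\<alpha> * ?c + k y a)"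
      using sums_Suc_iff[of "\<lambda>t. \<alpha> ^ t * k (traj f y ?w t) (?w t)" "\<alpha> * ?c"] by simp
    then have "(\<Sum>t. \<alpha> ^ t * k (traj f y ?w t) (?w t)) = \<alpha> * ?c + k y a"
      by (rule sums_unique[symmetric])
    moreover have "opt_disc_cost f k Y U \<alpha> y \<le> (\<Sum>t. \<alpha> ^ t * k (traj f y ?w t) (?w t))"
      using \<alpha> by (intro opt_disc_cost_le[OF y _ _ case_nat_in_adm[OF ya v]]) auto
    ultimately have "opt_disc_cost f k Y U \<alpha> y - k y a \<le> \<alpha> * ?c"
      by linarith
    then show "(opt_disc_cost f k Y U \<alpha> y - k y a) / \<alpha> \<le> ?c"
      using \<alpha> by (simp add: divide_le_eq mult.commute)
  qed
  then show ?thesis using \<alpha> by (simp add: divide_le_eq mult.commute)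
qed

lemma opt_disc_cost_ge_dual:
  assumes z: "z \<in> Y" and \<alpha>: "0 \<le> \<alpha>" "\<alpha> < 1" and dual: "dual_feasible f k Y U z \<mu> \<psi> \<eta>"
    and B: "\<And>y. y \<in> Y \<Longrightarrow> \<bar>\<eta> y\<bar> \<le> B"
  shows "\<mu> / (1 - \<alpha>) - 2 * B \<le> opt_disc_cost f k Y U \<alpha> z"
proof (rule opt_disc_cost_ge[OF z])
  fix u assume u: "u \<in> adm f Y U z"
  let ?y = "traj f z u"
  have "\<bar>\<eta> (?y t)\<bar> \<le> B" for t
    using B Gset_imp_in_Y(1)[OF adm_traj_in_Gset[OF u z, of t]] by blast
  note tel = discounted_telescope_bound[of "\<lambda>t. \<eta> (?y t)", OF this \<alpha>]
  have lhs: "(\<lambda>t. \<alpha> ^ t * \<mu> + \<alpha> ^ t * (\<eta> (?y t) - \<eta> (?y (Suc t))))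
      sums (\<mu> / (1 - \<alpha>) + (\<Sum>t. \<alpha> ^ t * (\<eta> (?y t) - \<eta> (?y (Suc t)))))"
    using \<alpha> by (intro sums_add sums_mult2[OF geometric_sums, of \<alpha> \<mu>, simplified] summable_sums tel(1))
       (auto simp: mult.commute)
  have stage: "\<alpha> ^ t * \<mu> + \<alpha> ^ t * (\<eta> (?y t) - \<eta> (?y (Suc t))) \<le> \<alpha> ^ t * k (?y t) (u t)" for t
    using dual_feasible_stage_bound[OF dual adm_traj_in_Gset[OF u z], of t] \<alpha>
    by (simp add: mult_left_mono flip: distrib_left)
  have "\<mu> / (1 - \<alpha>) + (\<Sum>t. \<alpha> ^ t * (\<eta> (?y t) - \<eta> (?y (Suc t))))
      \<le> (\<Sum>t. \<alpha> ^ t * k (?y t) (u t))"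
    by (rule sums_le[OF stage lhs summable_sums[OF disc_cost_summable_abs_le(1)[OF u z \<alpha>]]])
  then show "\<mu> / (1 - \<alpha>) - 2 * B \<le> (\<Sum>t. \<alpha> ^ t * k (?y t) (u t))"
    using tel(2) by (simp add: abs_le_iff)
qed

end

section \<open>Invariant measures and convergence of the optimal values\<close>

lemma continuous_on_compact_abs_bound:
  fixes g :: "'a::topological_space \<Rightarrow> real"
  assumes "compact S" "continuous_on S g"
  obtains C where "\<And>x. x \<in> S \<Longrightarrow> \<bar>g x\<bar> \<le> C"
proof -
  have "bounded (g ` S)" by (rule compact_imp_bounded[OF compact_continuous_image[OF assms(2,1)]])
  then show ?thesis using that unfolding bounded_iff by auto
qed

lemma space_eq_if_sets_restrict_borel:
  assumes "sets N = sets (restrict_space borel S)"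
  shows "space N = S"
  using sets_eq_imp_space_eq[OF assms] by (simp add: space_restrict_space)

lemma integrable_bounded_continuous_on:
  fixes g :: "'a::topological_space \<Rightarrow> real"
  assumes N: "finite_measure N" "sets N = sets (restrict_space borel S)"
    and g: "continuous_on S g" "\<And>x. x \<in> S \<Longrightarrow> \<bar>g x\<bar> \<le> C"
  shows "integrable N g"
proof -
  have "(borel_measurable N :: ('a \<Rightarrow> real) set) = borel_measurable (restrict_space borel S)"
    by (rule measurable_cong_sets[OF N(2)]) simp
  then have "g \<in> borel_measurable N"
    using borel_measurable_continuous_on_restrict[OF g(1)] by simp
  then show ?thesis
    using g(2) space_eq_if_sets_restrict_borel[OF N(2)]
    by (intro finite_measure.integrable_const_bound[OF N(1), of _ C] AE_I2) auto
qed

locale compact_cost_system = bounded_cost_system Y U f k M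
  for Y :: "'y::topological_space set" and U :: "'y \<Rightarrow> 'u::topological_space set"
    and f :: "'y \<Rightarrow> 'u \<Rightarrow> 'y" and k :: "'y \<Rightarrow> 'u \<Rightarrow> real" and M :: real +
  assumes compact_Y: "compact Y"
    and f_continuous: "continuous_on (Gset f Y U) (\<lambda>z. f (fst z) (snd z))"
    and k_continuous: "continuous_on (Gset f Y U) (\<lambda>z. k (fst z) (snd z))"
begin

lemma integrable_on_Gset:
  assumes N: "finite_measure N" "sets N = sets (restrict_space borel (Gset f Y U))"
    and \<phi>: "continuous_on Y (\<phi> :: 'y \<Rightarrow> real)"
  shows "integrable N (\<lambda>z. \<phi> (fst z))" "integrable N (\<lambda>z. \<phi> (f (fst z) (snd z)))"
    "integrable N (\<lambda>z. k (fst z) (snd z))"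
proof -
  obtain C where C: "\<And>y. y \<in> Y \<Longrightarrow> \<bar>\<phi> y\<bar> \<le> C"
    using continuous_on_compact_abs_bound[OF compact_Y \<phi>] by blast
  have "continuous_on (Gset f Y U) (\<lambda>z. \<phi> (fst z))"
    by (rule continuous_on_compose2[OF \<phi> continuous_on_fst]) (auto dest: Gset_imp_in_Y)
  then show "integrable N (\<lambda>z. \<phi> (fst z))"
    by (rule integrable_bounded_continuous_on[OF N, where C = C]) (auto intro!: C dest: Gset_imp_in_Y)
  have "continuous_on (Gset f Y U) (\<lambda>z. \<phi> (f (fst z) (snd z)))"
    by (rule continuous_on_compose2[OF \<phi> f_continuous]) (auto dest: Gset_imp_in_Y)
  then show "integrable N (\<lambda>z. \<phi> (f (fst z) (snd z)))"
    by (rule integrable_bounded_continuous_on[OF N, where C = C]) (auto intro!: C dest: Gset_imp_in_Y)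
  show "integrable N (\<lambda>z. k (fst z) (snd z))"
    by (rule integrable_bounded_continuous_on[OF N k_continuous]) (auto dest: k_bounded)
qed

lemma Wset_measure:
  assumes "\<gamma> \<in> Wset f Y U"
  shows "prob_space \<gamma>" "finite_measure \<gamma>" "sets \<gamma> = sets (restrict_space borel (Gset f Y U))"
  using assms unfolding Wset_def borel_prob_on_def by (auto intro: prob_space.finite_measure)

lemma integrable_Wset:
  assumes "\<gamma> \<in> Wset f Y U" "continuous_on Y (\<phi> :: 'y \<Rightarrow> real)"
  shows "integrable \<gamma> (\<lambda>z. \<phi> (fst z))" "integrable \<gamma> (\<lambda>z. \<phi> (f (fst z) (snd z)))"
    "integrable \<gamma> (\<lambda>z. k (fst z) (snd z))"
  using integrable_on_Gset[OF Wset_measure(2,3)[OF assms(1)] assms(2)] by auto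

lemma Wset_integral_step_le:
  assumes \<gamma>: "\<gamma> \<in> Wset f Y U" and \<phi>: "continuous_on Y \<phi>" and \<theta>: "continuous_on Y \<theta>"
    and step: "\<And>y a. (y, a) \<in> Gset f Y U \<Longrightarrow> \<phi> y \<le> c * k y a + \<theta> (f y a)"
  shows "(\<integral>z. \<phi> (fst z) \<partial>\<gamma>) \<le> c * (\<integral>z. k (fst z) (snd z) \<partial>\<gamma>) + (\<integral>z. \<theta> (fst z) \<partial>\<gamma>)"
proof -
  note i\<phi> = integrable_Wset[OF \<gamma> \<phi>] and i\<theta> = integrable_Wset[OF \<gamma> \<theta>]
  have "(\<integral>z. \<phi> (fst z) \<partial>\<gamma>) \<le> (\<integral>z. c * k (fst z) (snd z) + \<theta> (f (fst z) (snd z)) \<partial>\<gamma>)"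
  proof (rule integral_mono[OF i\<phi>(1)])
    show "integrable \<gamma> (\<lambda>z. c * k (fst z) (snd z) + \<theta> (f (fst z) (snd z)))"
      using i\<theta> by auto
    show "\<phi> (fst z) \<le> c * k (fst z) (snd z) + \<theta> (f (fst z) (snd z))" if "z \<in> space \<gamma>" for z
      using that step[of "fst z" "snd z"]
      by (simp add: space_eq_if_sets_restrict_borel[OF Wset_measure(3)[OF \<gamma>]])
  qed
  also have "\<dots> = c * (\<integral>z. k (fst z) (snd z) \<partial>\<gamma>) + (\<integral>z. \<theta> (f (fst z) (snd z)) \<partial>\<gamma>)"
    using i\<theta> by simp
  also have "(\<integral>z. \<theta> (f (fst z) (snd z)) \<partial>\<gamma>) = (\<integral>z. \<theta> (fst z) \<partial>\<gamma>)"
    using \<gamma> \<theta> i\<theta> unfolding Wset_def by auto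
  finally show ?thesis .
qed

lemma primal_feasible_value_le:
  assumes feas: "primal_feasible f Y U y0 \<gamma> \<xi>" and \<phi>: "continuous_on Y \<phi>"
    and D: "\<And>y a. (y, a) \<in> Gset f Y U \<Longrightarrow> \<phi> y - \<phi> (f y a) \<le> D"
  shows "\<phi> y0 \<le> (\<integral>z. \<phi> (fst z) \<partial>\<gamma>) + D * measure \<xi> (space \<xi>)"
proof -
  have \<gamma>: "\<gamma> \<in> Wset f Y U" and \<xi>: "finite_measure \<xi>" "sets \<xi> = sets (restrict_space borel (Gset f Y U))"
    and con: "(\<integral>z. \<phi> y0 - \<phi> (fst z) \<partial>\<gamma>) + (\<integral>z. \<phi> (f (fst z) (snd z)) - \<phi> (fst z) \<partial>\<xi>) = 0"
    using feas \<phi> unfolding primal_feasible_def borel_finite_on_def by auto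
  note i\<xi> = integrable_on_Gset[OF \<xi> \<phi>]
  have "(\<integral>z. \<phi> y0 - \<phi> (fst z) \<partial>\<gamma>) = (\<integral>z. \<phi> y0 \<partial>\<gamma>) - (\<integral>z. \<phi> (fst z) \<partial>\<gamma>)"
    by (rule Bochner_Integration.integral_diff[OF
          finite_measure.integrable_const[OF Wset_measure(2)[OF \<gamma>]] integrable_Wset(1)[OF \<gamma> \<phi>]])
  moreover have "(\<integral>z. \<phi> y0 \<partial>\<gamma>) = \<phi> y0"
    using prob_space.prob_space[OF Wset_measure(1)[OF \<gamma>]] by simp
  moreover have "(\<integral>z. - D \<partial>\<xi>) = - D * measure \<xi> (space \<xi>)"
    by (simp add: mult.commute)
  moreover have "(\<integral>z. - D \<partial>\<xi>) \<le> (\<integral>z. \<phi> (f (fst z) (snd z)) - \<phi> (fst z) \<partial>\<xi>)"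
  proof (rule integral_mono)
    show "- D \<le> \<phi> (f (fst z) (snd z)) - \<phi> (fst z)" if "z \<in> space \<xi>" for z
      using that D[of "fst z" "snd z"] by (simp add: space_eq_if_sets_restrict_borel[OF \<xi>(2)])
  qed (use i\<xi> finite_measure.integrable_const[OF \<xi>(1)] in auto)
  ultimately show ?thesis using con by linarith
qed

text \<open>The induction starts at 2 because continuity of V_T is assumed only for T > 1.\<close>

lemma integral_opt_cost_le:
  assumes \<gamma>: "\<gamma> \<in> Wset f Y U" and cont: "\<And>T. 2 \<le> T \<Longrightarrow> continuous_on Y (opt_cost f k Y U T)"
    and n: "2 \<le> n"
  shows "(\<integral>z. opt_cost f k Y U n (fst z) \<partial>\<gamma>) \<le> (real n - 2) * (\<integral>z. k (fst z) (snd z) \<partial>\<gamma>) + 2 * M"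
  using n
proof (induction n rule: nat_induct_at_least)
  case base
  have "(\<integral>z. opt_cost f k Y U 2 (fst z) \<partial>\<gamma>) \<le> (\<integral>z. 2 * M \<partial>\<gamma>)"
  proof (rule integral_mono)
    show "opt_cost f k Y U 2 (fst z) \<le> 2 * M" if "z \<in> space \<gamma>" for z
      using that opt_cost_abs_le[of "fst z" 2] Gset_imp_in_Y(1)[of "fst z" "snd z"]
      by (auto simp: space_eq_if_sets_restrict_borel[OF Wset_measure(3)[OF \<gamma>]] abs_le_iff)
  qed (use integrable_Wset(1)[OF \<gamma> cont] finite_measure.integrable_const[OF Wset_measure(2)[OF \<gamma>]] in auto)
  then show ?case using prob_space.prob_space[OF Wset_measure(1)[OF \<gamma>]] by simp
next
  case (Suc n)
  have "(\<integral>z. opt_cost f k Y U (Suc n) (fst z) \<partial>\<gamma>)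
      \<le> 1 * (\<integral>z. k (fst z) (snd z) \<partial>\<gamma>) + (\<integral>z. opt_cost f k Y U n (fst z) \<partial>\<gamma>)"
    using Suc.hyps by (intro Wset_integral_step_le[OF \<gamma> cont cont]) (auto intro: opt_cost_Suc_le)
  then show ?case using Suc.IH by (simp add: algebra_simps)
qed

lemma V_T_le_primal:
  assumes feas: "primal_feasible f Y U y0 \<gamma> \<xi>"
    and cont: "\<And>T. 1 < T \<Longrightarrow> continuous_on Y (V_T f k Y U T)"
  shows "\<exists>C. \<forall>T\<ge>2. V_T f k Y U T y0 \<le> (\<integral>z. k (fst z) (snd z) \<partial>\<gamma>) + C / real T"
proof (intro exI allI impI)
  fix T :: nat assume T: "2 \<le> T"
  define K where "K = (\<integral>z. k (fst z) (snd z) \<partial>\<gamma>)"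
  define m where "m = measure \<xi> (space \<xi>)"
  have opt_cont: "continuous_on Y (opt_cost f k Y U n)" if "2 \<le> n" for n
  proof -
    have "opt_cost f k Y U n = (\<lambda>y. real n * V_T f k Y U n y)"
      using that by (simp add: V_T_eq_opt_cost)
    then show ?thesis using cont[of n] that by (simp add: continuous_on_mult_left)
  qed
  have "opt_cost f k Y U T y0 \<le> (\<integral>z. opt_cost f k Y U T (fst z) \<partial>\<gamma>) + (2 * M) * m"
    unfolding m_def
  proof (rule primal_feasible_value_le[OF feas opt_cont[OF T]])
    fix y a assume ya: "(y, a) \<in> Gset f Y U"
    obtain S where S: "T = Suc S" using T by (cases T) auto
    show "opt_cost f k Y U T y - opt_cost f k Y U T (f y a) \<le> 2 * M"
      using opt_cost_Suc_le[OF ya, of S] opt_cost_le_Suc[OF Gset_imp_in_Y(2)[OF ya], of S]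
        k_bounded[OF ya] unfolding S by linarith
  qed
  with integral_opt_cost_le[OF _ opt_cont T] feas
  have "opt_cost f k Y U T y0 \<le> (real T - 2) * K + 2 * M + 2 * M * m"
    unfolding K_def primal_feasible_def by fastforce
  then have "V_T f k Y U T y0 \<le> ((real T - 2) * K + 2 * M + 2 * M * m) / real T"
    using T by (simp add: V_T_eq_opt_cost divide_right_mono)
  also have "\<dots> = K + (2 * M + 2 * M * m - 2 * K) / real T"
    using T by (simp add: field_simps)
  finally show "V_T f k Y U T y0 \<le> (\<integral>z. k (fst z) (snd z) \<partial>\<gamma>) + (2 * M + 2 * M * m - 2 * K) / real T"
    unfolding K_def .
qed

lemma h_disc_le_primal:
  assumes feas: "primal_feasible f Y U y0 \<gamma> \<xi>"
    and \<alpha>: "0 < \<alpha>" "\<alpha> < 1" and cont: "continuous_on Y (h_disc f k Y U \<alpha>)"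
  shows "h_disc f k Y U \<alpha> y0 \<le> (\<integral>z. k (fst z) (snd z) \<partial>\<gamma>) + 2 * M * measure \<xi> (space \<xi>) * (1 - \<alpha>)"
proof -
  let ?h = "h_disc f k Y U \<alpha>"
  have \<gamma>: "\<gamma> \<in> Wset f Y U" using feas unfolding primal_feasible_def by blast
  have step: "?h y \<le> (1 - \<alpha>) * k y a + \<alpha> * ?h (f y a)" if "(y, a) \<in> Gset f Y U" for y a
    using mult_left_mono[OF opt_disc_cost_le_step[OF that \<alpha>], of "1 - \<alpha>"] \<alpha>
    by (simp add: h_disc_eq_opt_disc_cost algebra_simps)
  have "(\<integral>z. ?h (fst z) \<partial>\<gamma>)
      \<le> (1 - \<alpha>) * (\<integral>z. k (fst z) (snd z) \<partial>\<gamma>) + (\<integral>z. \<alpha> * ?h (fst z) \<partial>\<gamma>)"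
    using cont by (intro Wset_integral_step_le[OF \<gamma>] step continuous_on_mult_left) auto
  then have "(1 - \<alpha>) * (\<integral>z. ?h (fst z) \<partial>\<gamma>) \<le> (1 - \<alpha>) * (\<integral>z. k (fst z) (snd z) \<partial>\<gamma>)"
    by (simp add: algebra_simps)
  then have int_le: "(\<integral>z. ?h (fst z) \<partial>\<gamma>) \<le> (\<integral>z. k (fst z) (snd z) \<partial>\<gamma>)"
    using \<alpha> by (simp add: mult_le_cancel_left_pos)
  have "?h y0 \<le> (\<integral>z. ?h (fst z) \<partial>\<gamma>) + (2 * M * (1 - \<alpha>)) * measure \<xi> (space \<xi>)"
  proof (rule primal_feasible_value_le[OF feas cont])
    fix y a assume ya: "(y, a) \<in> Gset f Y U"
    have "\<bar>?h (f y a)\<bar> \<le> M"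
      using mult_left_mono[OF opt_disc_cost_abs_le[OF Gset_imp_in_Y(2)[OF ya], of \<alpha>], of "1 - \<alpha>"] \<alpha>
      by (simp add: h_disc_eq_opt_disc_cost abs_mult)
    then have "- M \<le> ?h (f y a)" by (simp add: abs_le_iff)
    then have "(1 - \<alpha>) * (k y a - ?h (f y a)) \<le> (1 - \<alpha>) * (2 * M)"
      using k_bounded[OF ya] \<alpha> by (intro mult_left_mono) auto
    then show "?h y - ?h (f y a) \<le> 2 * M * (1 - \<alpha>)"
      using step[OF ya] by (simp add: algebra_simps)
  qed
  with int_le show ?thesis by (simp add: algebra_simps)
qed

lemma Liminf_V_T_ge_dual:
  assumes "y0 \<in> Y" "continuous_on Y \<eta>" "dual_feasible f k Y U y0 \<mu> \<psi> \<eta>"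
  shows "ereal \<mu> \<le> Liminf sequentially (\<lambda>T. ereal (V_T f k Y U T y0))"
proof -
  obtain B where B: "\<And>y. y \<in> Y \<Longrightarrow> \<bar>\<eta> y\<bar> \<le> B"
    using continuous_on_compact_abs_bound[OF compact_Y assms(2)] by blast
  have "\<mu> - 2 * B / real T \<le> V_T f k Y U T y0" if "0 < T" for T
    using divide_right_mono[OF opt_cost_ge_dual[OF assms(1,3) B, of T], of "real T"] that
    by (simp add: V_T_eq_opt_cost diff_divide_distrib)
  then show ?thesis
    by (intro Liminf_ereal_ge_of_tendsto[where g = "\<lambda>T. \<mu> - 2 * B / real T"] tendsto_eq_intros)
       (auto intro: eventually_mono[OF eventually_gt_at_top[of 0]])
qed

lemma Limsup_V_T_le_primal:
  assumes "primal_feasible f Y U y0 \<gamma> \<xi>" "\<And>T. 1 < T \<Longrightarrow> continuous_on Y (V_T f k Y U T)"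
  shows "Limsup sequentially (\<lambda>T. ereal (V_T f k Y U T y0)) \<le> ereal (\<integral>z. k (fst z) (snd z) \<partial>\<gamma>)"
proof -
  obtain C where C: "\<And>T. 2 \<le> T \<Longrightarrow> V_T f k Y U T y0 \<le> (\<integral>z. k (fst z) (snd z) \<partial>\<gamma>) + C / real T"
    using V_T_le_primal[OF assms] by blast
  then show ?thesis
    by (intro Limsup_ereal_le_of_tendsto[where g = "\<lambda>T. (\<integral>z. k (fst z) (snd z) \<partial>\<gamma>) + C / real T"]
        tendsto_eq_intros)
       (auto intro: eventually_mono[OF eventually_ge_at_top[of 2]])
qed

lemma Liminf_h_disc_ge_dual:
  assumes "y0 \<in> Y" "continuous_on Y \<eta>" "dual_feasible f k Y U y0 \<mu> \<psi> \<eta>"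
  shows "ereal \<mu> \<le> Liminf (at_left 1) (\<lambda>\<alpha>. ereal (h_disc f k Y U \<alpha> y0))"
proof -
  obtain B where B: "\<And>y. y \<in> Y \<Longrightarrow> \<bar>\<eta> y\<bar> \<le> B"
    using continuous_on_compact_abs_bound[OF compact_Y assms(2)] by blast
  have "\<mu> - 2 * B * (1 - \<alpha>) \<le> h_disc f k Y U \<alpha> y0" if "0 < \<alpha>" "\<alpha> < 1" for \<alpha>
  proof -
    have "(1 - \<alpha>) * (\<mu> / (1 - \<alpha>) - 2 * B) \<le> h_disc f k Y U \<alpha> y0"
      using mult_left_mono[OF opt_disc_cost_ge_dual[OF assms(1) _ _ assms(3) B, of \<alpha>], of "1 - \<alpha>"] that
      by (simp add: h_disc_eq_opt_disc_cost)
    moreover have "(1 - \<alpha>) * (\<mu> / (1 - \<alpha>) - 2 * B) = \<mu> - 2 * B * (1 - \<alpha>)"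
      using that by (simp add: field_simps)
    ultimately show ?thesis by simp
  qed
  then show ?thesis
    by (intro Liminf_ereal_ge_of_tendsto[where g = "\<lambda>\<alpha>. \<mu> - 2 * B * (1 - \<alpha>)"] tendsto_eq_intros)
       (auto intro: eventually_mono[OF eventually_at_left_real[of 0 1]])
qed

lemma Limsup_h_disc_le_primal:
  assumes "primal_feasible f Y U y0 \<gamma> \<xi>" "\<And>\<alpha>. \<alpha> \<in> {0<..<1} \<Longrightarrow> continuous_on Y (h_disc f k Y U \<alpha>)"
  shows "Limsup (at_left 1) (\<lambda>\<alpha>. ereal (h_disc f k Y U \<alpha> y0)) \<le> ereal (\<integral>z. k (fst z) (snd z) \<partial>\<gamma>)"
  using h_disc_le_primal[OF assms(1)] assms(2)
  by (intro Limsup_ereal_le_of_tendsto[where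
        g = "\<lambda>\<alpha>. (\<integral>z. k (fst z) (snd z) \<partial>\<gamma>) + 2 * M * measure \<xi> (space \<xi>) * (1 - \<alpha>)"] tendsto_eq_intros)
     (auto intro: eventually_mono[OF eventually_at_left_real[of 0 1]])

end

theorem proposition4p1:
  fixes Y :: "'y::euclidean_space set" and U0 :: "'u::metric_space set"
    and U :: "'y \<Rightarrow> 'u set" and f :: "'y \<Rightarrow> 'u \<Rightarrow> 'y" and k :: "'y \<Rightarrow> 'u \<Rightarrow> real"
    and y0 :: 'y
  assumes "Y \<noteq> {}" and "compact Y" and "compact U0"
    and "\<forall>y\<in>Y. U y \<subseteq> U0 \<and> compact (U y)"
    and "usc_on Y U"
    and "continuous_on (UNIV \<times> U0) (\<lambda>(y, u). f y u)"
    and "continuous_on (UNIV \<times> U0) (\<lambda>(y, u). k y u)"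
    and "\<forall>y\<in>Y. Aset f Y U y \<noteq> {}"
    and "y0 \<in> Y"
    and "d_star f k Y U y0 = k_star f k Y U y0"
  shows "((\<forall>T::nat. T > 1 \<longrightarrow> continuous_on Y (V_T f k Y U T)) \<longrightarrow>
            ((\<lambda>T. ereal (V_T f k Y U T y0)) \<longlongrightarrow> d_star f k Y U y0) sequentially)
       \<and> ((\<forall>\<alpha>\<in>{0<..<1::real}. continuous_on Y (h_disc f k Y U \<alpha>)) \<longrightarrow>
            ((\<lambda>\<alpha>. ereal (h_disc f k Y U \<alpha> y0)) \<longlongrightarrow> d_star f k Y U y0) (at_left 1))"
proof -
  have G_sub: "Gset f Y U \<subseteq> Y \<times> U0" using assms(4) by (auto simp: Gset_def Aset_def)
  have "(\<lambda>(y, u). f y u) = (\<lambda>z. f (fst z) (snd z))" "(\<lambda>(y, u). k y u) = (\<lambda>z. k (fst z) (snd z))"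
    by auto
  then have f_cont: "continuous_on (Y \<times> U0) (\<lambda>z. f (fst z) (snd z))"
    and k_cont: "continuous_on (Y \<times> U0) (\<lambda>z. k (fst z) (snd z))"
    using continuous_on_subset[OF assms(6), of "Y \<times> U0"] continuous_on_subset[OF assms(7), of "Y \<times> U0"]
    by auto
  obtain M where "\<And>z. z \<in> Y \<times> U0 \<Longrightarrow> \<bar>k (fst z) (snd z)\<bar> \<le> M"
    using continuous_on_compact_abs_bound[OF compact_Times[OF assms(2,3)] k_cont] by blast
  then interpret compact_cost_system Y U f k M
    using assms(2,8) G_sub continuous_on_subset[OF f_cont G_sub] continuous_on_subset[OF k_cont G_sub]
    by unfold_locales force+
  show ?thesis
  proof (intro conjI impI)
    assume "\<forall>T::nat. T > 1 \<longrightarrow> continuous_on Y (V_T f k Y U T)"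
    then show "((\<lambda>T. ereal (V_T f k Y U T y0)) \<longlongrightarrow> d_star f k Y U y0) sequentially"
      using assms(9) by (intro tendsto_d_star_by_duality[OF _ assms(10)] Liminf_V_T_ge_dual
          Limsup_V_T_le_primal) auto
  next
    assume "\<forall>\<alpha>\<in>{0<..<1::real}. continuous_on Y (h_disc f k Y U \<alpha>)"
    then show "((\<lambda>\<alpha>. ereal (h_disc f k Y U \<alpha> y0)) \<longlongrightarrow> d_star f k Y U y0) (at_left 1)"
      using assms(9) by (intro tendsto_d_star_by_duality[OF _ assms(10)] Liminf_h_disc_ge_dual
          Limsup_h_disc_le_primal) auto
  qed
qed

end
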